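(* Let $\mathcal{S}_{reb}\subset\mathbb{R}^3$ be the rebit state space. Then $$\sup\,\bar P(\mathsf{M}^{(1)},\mathsf{M}^{(2)})=\frac12\Big(1+\frac{1}{\sqrt2}\Big),$$ where the supremum ranges over all pairs of dichotomic measurements on $\mathcal{S}_{reb}$, and the supremum is attained.
   Context: The rebit state space is $\mathcal{S}_{reb}=\{(x,y,1)^T : x^2+y^2\le1\}$, whose pure states are $s_\theta=(\cos\theta,\sin\theta,1)^T$. Effects are linear functionals $e$ on $\mathbb{R}^3$ with $0\le e\le1$ on $\mathcal{S}_{reb}$; unit effect $u=(0,0,1)$ (acting by dot product); $\|f\|=\max_{s\in\mathcal{S}_{reb}}|f(s)|$. A dichotomic measurement is a pair of effects $\mathsf{M}_+,\mathsf{M}_-$ with $\mathsf{M}_++\mathsf{M}_-=u$, and $\bar P(\mathsf{M}^{(1)},\mathsf{M}^{(2)})=\frac18\sum_{x,y\in\{+,-\}}\|\mathsf{M}^{(1)}_x+\mathsf{M}^{(2)}_y\|$. *)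

theory Defs
  imports "HOL-Analysis.Analysis"
begin

definition reb_states :: "(real^3) set" where
  "reb_states = {s. s$3 = 1 \<and> (s$1)^2 + (s$2)^2 \<le> 1}"

text \<open>Linear functionals on R^3 are represented by vectors acting via the dot product.\<close>
definition is_effect :: "real^3 \<Rightarrow> bool" where
  "is_effect e \<longleftrightarrow> (\<forall>s\<in>reb_states. 0 \<le> e \<bullet> s \<and> e \<bullet> s \<le> 1)"

definition unit_eff :: "real^3" where
  "unit_eff = (\<chi> i. if i = 3 then 1 else 0)"

definition fnorm :: "real^3 \<Rightarrow> real" where
  "fnorm f = Sup ((\<lambda>s. \<bar>f \<bullet> s\<bar>) ` reb_states)"

definition dichotomic :: "(real^3) \<times> (real^3) \<Rightarrow> bool" where
  "dichotomic M \<longleftrightarrow> is_effect (fst M) \<and> is_effect (snd M) \<and> fst M + snd M = unit_eff"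

definition Pbar :: "(real^3) \<times> (real^3) \<Rightarrow> (real^3) \<times> (real^3) \<Rightarrow> real" where
  "Pbar M1 M2 = (1/8) * (fnorm (fst M1 + fst M2) + fnorm (fst M1 + snd M2)
                        + fnorm (snd M1 + fst M2) + fnorm (snd M1 + snd M2))"

end

theory Submission
  imports Defs
begin

text \<open>Write a functional as f = (v, c) with Bloch part v = (f1, f2) and c = f3. On the rebit
  states f takes exactly the values in the interval [c - |v|, c + |v|], so f is an effect iff
  |v| <= c <= 1 - |v|, and the norm of f is |c| + |v|. For dichotomic measurements whose first
  effects have Bloch parts a and b, the four constant parts in the definition of P are
  nonnegative and add up to 4, so P = 1/2 + (|a + b| + |a - b|) / 4. Since |a|, |b| <= 1/2,
  the parallelogram law bounds |a + b| + |a - b| by sqrt 2, with equality for orthogonal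
  a and b of length 1/2.\<close>

definition bloch :: "real^3 \<Rightarrow> real^2" where
  "bloch f = vector [f$1, f$2]"

definition rebit_state :: "real^2 \<Rightarrow> real^3" where
  "rebit_state u = vector [u$1, u$2, 1]"

lemma bloch_add: "bloch (f + g) = bloch f + bloch g"
  by (simp add: bloch_def vec_eq_iff forall_2)

lemma bloch_diff: "bloch (f - g) = bloch f - bloch g"
  by (simp add: bloch_def vec_eq_iff forall_2)

lemma bloch_unit_eff: "bloch unit_eff = 0"
  by (simp add: bloch_def unit_eff_def vec_eq_iff forall_2)

lemma unit_eff_3: "unit_eff $ 3 = 1"
  by (simp add: unit_eff_def)

lemma inner_rebit_state: "f \<bullet> rebit_state u = bloch f \<bullet> u + f$3"
  by (simp add: bloch_def rebit_state_def inner_vec_def sum_2 sum_3)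

lemma norm_vec2: "norm (u :: real^2) = sqrt ((u$1)\<^sup>2 + (u$2)\<^sup>2)"
  by (simp add: norm_vec_def L2_set_def sum_2)

lemma reb_states_eq_image_cball: "reb_states = rebit_state ` cball 0 1"
proof
  show "reb_states \<subseteq> rebit_state ` cball 0 1"
  proof
    fix s assume "s \<in> reb_states"
    then have "s = rebit_state (bloch s)" "bloch s \<in> cball 0 1"
      by (auto simp: reb_states_def rebit_state_def bloch_def vec_eq_iff forall_3 norm_vec2)
    then show "s \<in> rebit_state ` cball 0 1" by blast
  qed
  show "rebit_state ` cball 0 1 \<subseteq> reb_states"
    by (auto simp: reb_states_def rebit_state_def norm_vec2)
qed

lemma inner_image_cball:
  fixes v :: "'a::real_inner"
  shows "(\<lambda>u. v \<bullet> u + c) ` cball 0 1 = {c - norm v .. c + norm v}"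
proof
  show "(\<lambda>u. v \<bullet> u + c) ` cball 0 1 \<subseteq> {c - norm v .. c + norm v}"
  proof clarify
    fix u :: 'a assume "u \<in> cball 0 1"
    then have "\<bar>v \<bullet> u\<bar> \<le> norm v"
      using Cauchy_Schwarz_ineq2[of v u] mult_left_le[of "norm u" "norm v"] by simp
    then show "v \<bullet> u + c \<in> {c - norm v .. c + norm v}" by auto
  qed
  show "{c - norm v .. c + norm v} \<subseteq> (\<lambda>u. v \<bullet> u + c) ` cball 0 1"
  proof
    fix x assume x: "x \<in> {c - norm v .. c + norm v}"
    define u where "u = ((x - c) / norm v) *\<^sub>R sgn v"
    have "v \<bullet> u = x - c"
      using x by (cases "v = 0") (auto simp: u_def sgn_div_norm power2_norm_eq_inner [symmetric]
          power2_eq_square)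
    moreover have "norm u \<le> 1"
      using x by (cases "v = 0") (auto simp: u_def norm_sgn abs_le_iff divide_simps)
    ultimately show "x \<in> (\<lambda>u. v \<bullet> u + c) ` cball 0 1"
      by (intro image_eqI[of _ _ u]) auto
  qed
qed

lemma inner_image_reb_states:
  "(\<lambda>s. f \<bullet> s) ` reb_states = {f$3 - norm (bloch f) .. f$3 + norm (bloch f)}"
  unfolding reb_states_eq_image_cball image_image inner_rebit_state by (rule inner_image_cball)

lemma is_effect_iff: "is_effect e \<longleftrightarrow> norm (bloch e) \<le> e$3 \<and> e$3 + norm (bloch e) \<le> 1"
proof -
  have "is_effect e \<longleftrightarrow> (\<lambda>s. e \<bullet> s) ` reb_states \<subseteq> {0..1}"
    by (auto simp: is_effect_def)
  also have "\<dots> \<longleftrightarrow> norm (bloch e) \<le> e$3 \<and> e$3 + norm (bloch e) \<le> 1"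
    unfolding inner_image_reb_states using norm_ge_zero[of "bloch e"] by auto
  finally show ?thesis .
qed

lemma is_effect_bounds:
  assumes "is_effect e"
  shows "0 \<le> e$3" "e$3 \<le> 1" "norm (bloch e) \<le> 1/2"
  using assms norm_ge_zero[of "bloch e"] unfolding is_effect_iff by linarith+

lemma Sup_abs_centered_interval:
  fixes c n :: real
  assumes "0 \<le> n"
  shows "Sup (abs ` {c - n .. c + n}) = \<bar>c\<bar> + n"
proof (rule cSup_eq_maximum)
  have "(if 0 \<le> c then c + n else c - n) \<in> {c - n .. c + n}"
    using assms by auto
  moreover have "\<bar>if 0 \<le> c then c + n else c - n\<bar> = \<bar>c\<bar> + n"
    using assms by auto
  ultimately show "\<bar>c\<bar> + n \<in> abs ` {c - n .. c + n}"
    by (metis imageI)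
  show "x \<le> \<bar>c\<bar> + n" if "x \<in> abs ` {c - n .. c + n}" for x
    using that by auto
qed

lemma fnorm_eq: "fnorm f = \<bar>f$3\<bar> + norm (bloch f)"
proof -
  have "fnorm f = Sup (abs ` (\<lambda>s. f \<bullet> s) ` reb_states)"
    by (simp add: fnorm_def image_image)
  also have "\<dots> = \<bar>f$3\<bar> + norm (bloch f)"
    unfolding inner_image_reb_states by (rule Sup_abs_centered_interval) simp
  finally show ?thesis .
qed

lemma dichotomic_snd: "dichotomic M \<Longrightarrow> snd M = unit_eff - fst M"
  by (metis add_diff_cancel_left' dichotomic_def)

lemma Pbar_dichotomic:
  assumes "dichotomic M1" "dichotomic M2"
  shows "Pbar M1 M2 = 1/2 + (norm (bloch (fst M1) + bloch (fst M2))
                            + norm (bloch (fst M1) - bloch (fst M2))) / 4"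
proof -
  define a1 a2 c1 c2
    where "a1 = bloch (fst M1)" "a2 = bloch (fst M2)" "c1 = fst M1 $ 3" "c2 = fst M2 $ 3"
  have c: "0 \<le> c1" "c1 \<le> 1" "0 \<le> c2" "c2 \<le> 1"
    using assms by (auto simp: a1_a2_c1_c2_def dichotomic_def dest: is_effect_bounds)
  note fnorm_simps = fnorm_eq bloch_add bloch_diff bloch_unit_eff vector_add_component
    vector_minus_component unit_eff_3 a1_a2_c1_c2_def[symmetric]
  have "fnorm (fst M1 + fst M2) = c1 + c2 + norm (a1 + a2)"
    using c by (simp only: fnorm_simps)
  moreover have "fnorm (fst M1 + (unit_eff - fst M2)) = 1 + c1 - c2 + norm (a1 - a2)"
    using c by (simp only: fnorm_simps) simp
  moreover have "fnorm (unit_eff - fst M1 + fst M2) = 1 - c1 + c2 + norm (a1 - a2)"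
    using c by (simp only: fnorm_simps) (simp add: norm_minus_commute)
  moreover have "fnorm (unit_eff - fst M1 + (unit_eff - fst M2)) = 2 - c1 - c2 + norm (a1 + a2)"
    using c by (simp only: fnorm_simps) (simp add: norm_minus_commute add.commute)
  ultimately show ?thesis
    unfolding Pbar_def dichotomic_snd[OF assms(1)] dichotomic_snd[OF assms(2)] a1_a2_c1_c2_def
    by simp
qed

lemma parallelogram_law:
  fixes a b :: "'a::real_inner"
  shows "(norm (a + b))\<^sup>2 + (norm (a - b))\<^sup>2 = 2 * ((norm a)\<^sup>2 + (norm b)\<^sup>2)"
  by (simp add: power2_norm_eq_inner inner_add inner_diff inner_commute)

lemma norm_add_plus_norm_diff_le:
  fixes a b :: "'a::real_inner"
  shows "norm (a + b) + norm (a - b) \<le> 2 * sqrt ((norm a)\<^sup>2 + (norm b)\<^sup>2)"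
proof -
  have "(norm (a + b) + norm (a - b))\<^sup>2 \<le> 2 * ((norm (a + b))\<^sup>2 + (norm (a - b))\<^sup>2)"
    using zero_le_power2[of "norm (a + b) - norm (a - b)"] by (simp add: power2_eq_square algebra_simps)
  also have "\<dots> = (2 * sqrt ((norm a)\<^sup>2 + (norm b)\<^sup>2))\<^sup>2"
    by (simp add: parallelogram_law power_mult_distrib)
  finally show ?thesis
    by (rule power2_le_imp_le) simp
qed

lemma Pbar_le:
  assumes "dichotomic M1" "dichotomic M2"
  shows "Pbar M1 M2 \<le> (1/2) * (1 + 1 / sqrt 2)"
proof -
  let ?a1 = "bloch (fst M1)" and ?a2 = "bloch (fst M2)"
  have "(norm ?a1)\<^sup>2 \<le> (1/2)\<^sup>2" "(norm ?a2)\<^sup>2 \<le> (1/2)\<^sup>2"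
    using assms by (auto simp: dichotomic_def intro!: power_mono dest: is_effect_bounds)
  then have "sqrt ((norm ?a1)\<^sup>2 + (norm ?a2)\<^sup>2) \<le> sqrt (1/2)"
    by (intro real_sqrt_le_mono) (simp add: power2_eq_square)
  then have "norm (?a1 + ?a2) + norm (?a1 - ?a2) \<le> 2 * sqrt (1/2)"
    using norm_add_plus_norm_diff_le[of ?a1 ?a2] by linarith
  then show ?thesis
    unfolding Pbar_dichotomic[OF assms] by (simp add: real_sqrt_divide field_simps)
qed

text \<open>Both outcomes have probability 1/2 on the maximally mixed state (0, 0, 1).\<close>

definition unbiased_measurement :: "real^2 \<Rightarrow> (real^3) \<times> (real^3)" where
  "unbiased_measurement a = (vector [a$1, a$2, 1/2], vector [- a$1, - a$2, 1/2])"

lemma bloch_fst_unbiased_measurement: "bloch (fst (unbiased_measurement a)) = a"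
  by (simp add: unbiased_measurement_def bloch_def vec_eq_iff forall_2)

lemma dichotomic_unbiased_measurement:
  assumes "norm a \<le> 1/2"
  shows "dichotomic (unbiased_measurement a)"
proof -
  have "bloch (vector [a$1, a$2, 1/2]) = a" "bloch (vector [- a$1, - a$2, 1/2]) = - a"
    by (simp_all add: bloch_def vec_eq_iff forall_2)
  then have "is_effect (vector [a$1, a$2, 1/2])" "is_effect (vector [- a$1, - a$2, 1/2])"
    using assms by (simp_all only: is_effect_iff norm_minus_cancel vector_3) simp_all
  moreover have "vector [a$1, a$2, 1/2] + vector [- a$1, - a$2, 1/2] = unit_eff"
    by (simp add: unit_eff_def vec_eq_iff forall_3)
  ultimately show ?thesis
    by (simp add: dichotomic_def unbiased_measurement_def)
qed

lemma norm_add_diff_orthogonal: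
  fixes a b :: "'a::real_inner"
  assumes "a \<bullet> b = 0"
  shows "norm (a + b) = sqrt ((norm a)\<^sup>2 + (norm b)\<^sup>2)"
    and "norm (a - b) = sqrt ((norm a)\<^sup>2 + (norm b)\<^sup>2)"
proof -
  have "(norm (a + b))\<^sup>2 = (norm a)\<^sup>2 + (norm b)\<^sup>2"
    using assms dot_norm[of a b] by simp
  moreover have "(norm (a - b))\<^sup>2 = (norm a)\<^sup>2 + (norm b)\<^sup>2"
    using assms dot_norm_neg[of a b] by simp
  ultimately show "norm (a + b) = sqrt ((norm a)\<^sup>2 + (norm b)\<^sup>2)"
    and "norm (a - b) = sqrt ((norm a)\<^sup>2 + (norm b)\<^sup>2)"
    by (metis norm_ge_zero real_sqrt_unique)+
qed

lemma Pbar_unbiased_measurement_orthogonal: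
  assumes "norm a = 1/2" "norm b = 1/2" "a \<bullet> b = 0"
  shows "Pbar (unbiased_measurement a) (unbiased_measurement b) = (1/2) * (1 + 1 / sqrt 2)"
proof -
  have "norm (a + b) = sqrt (1/2)" "norm (a - b) = sqrt (1/2)"
    using norm_add_diff_orthogonal[OF assms(3)] by (simp_all add: assms power_divide)
  moreover have "dichotomic (unbiased_measurement a)" "dichotomic (unbiased_measurement b)"
    using assms by (simp_all add: dichotomic_unbiased_measurement)
  ultimately show ?thesis
    by (simp add: Pbar_dichotomic bloch_fst_unbiased_measurement real_sqrt_divide field_simps)
qed

theorem mainTheorem14:
  shows "Sup {Pbar M1 M2 | M1 M2. dichotomic M1 \<and> dichotomic M2} = (1/2) * (1 + 1 / sqrt 2)
         \<and> (\<exists>M1 M2. dichotomic M1 \<and> dichotomic M2 \<and> Pbar M1 M2 = (1/2) * (1 + 1 / sqrt 2))"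
proof -
  define a b :: "real^2" where "a = vector [1/2, 0]" "b = vector [0, 1/2]"
  have "norm a = 1/2" "norm b = 1/2" "a \<bullet> b = 0"
    by (simp_all add: a_b_def norm_vec2 inner_vec_def sum_2)
  then have opt: "dichotomic (unbiased_measurement a)" "dichotomic (unbiased_measurement b)"
      "(1/2) * (1 + 1 / sqrt 2) = Pbar (unbiased_measurement a) (unbiased_measurement b)"
    by (simp_all add: dichotomic_unbiased_measurement Pbar_unbiased_measurement_orthogonal)
  have "Sup {Pbar M1 M2 | M1 M2. dichotomic M1 \<and> dichotomic M2} = (1/2) * (1 + 1 / sqrt 2)"
    using opt Pbar_le by (intro cSup_eq_maximum) blast+
  with opt show ?thesis
    by metis
qed

end
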